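(* Let $n\ge2$ and $\mathbf{F}\in\mathbb{R}^n$ with $F_k>0$ for all $k$ and $F_k\ge F_{k+1}$ for $2\le k\le n-1$. Let $U_i=\frac{i}{3/F_1+\sum_{k=2}^i1/F_k}$ for $1\le i\le n$, let $u$ be the least index in $\arg\max_{1\le i\le n}U_i$, and define $\boldsymbol\mu\in\mathbb{R}^{n-1}$ by $\mu_k=\frac13\big(1-\frac{U_u}{F_{k+1}}\big)$ for $1\le k\le u-1$ and $\mu_k=0$ for $u\le k\le n-1$. Then: (1) $\mu_k\ge0$ for all $1\le k\le n-1$; (2) $F_1\big(\frac13+\sum_{i=1}^{u-1}\mu_i\big)=F_k(1-3\mu_{k-1})=U_u$ for all $2\le k\le u$; (3) $F_k\le U_u$ for all $u+1\le k\le n$.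
   Context: Note $U_u=\frac{u}{3/F_1+\sum_{k=2}^u1/F_k}$. *)

theory Defs
  imports Complex_Main
begin

text \<open>Vectors F in R^n are represented as functions nat => real, used on indices 1..n.\<close>

definition U :: "(nat \<Rightarrow> real) \<Rightarrow> nat \<Rightarrow> real" where
  "U F i = real i / (3 / F 1 + (\<Sum>k=2..i. 1 / F k))"

definition uidx :: "(nat \<Rightarrow> real) \<Rightarrow> nat \<Rightarrow> nat" where
  "uidx F n = (LEAST i. i \<in> {1..n} \<and> (\<forall>j\<in>{1..n}. U F j \<le> U F i))"

definition mu :: "(nat \<Rightarrow> real) \<Rightarrow> nat \<Rightarrow> nat \<Rightarrow> real" where
  "mu F n k = (if 1 \<le> k \<and> k \<le> uidx F n - 1
               then (1 - U F (uidx F n) / F (k + 1)) / 3 else 0)"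

end

theory Submission
  imports Defs
begin

text \<open>
  Write \<open>U i = i / S i\<close> with \<open>S i = 3 / F 1 + (\<Sum>k=2..i. 1 / F k)\<close>. Then
  \<open>U (i + 1) = (i + 1) / (S i + 1 / F (i + 1))\<close> is the mediant of \<open>i / S i\<close> and
  \<open>1 / (1 / F (i + 1))\<close>, so it lies between \<open>U i\<close> and \<open>F (i + 1)\<close>: \<open>U\<close> goes up
  exactly while it stays below \<open>F\<close>. At the maximiser \<open>u\<close> this gives \<open>U u \<le> F u\<close>
  (from \<open>U (u - 1) \<le> U u\<close>) and \<open>F (u + 1) \<le> U u\<close> (from \<open>U (u + 1) \<le> U u\<close>), and
  monotonicity of \<open>F\<close> from index 2 on spreads these to all \<open>2 \<le> k \<le> u\<close> and all
  \<open>k > u\<close>. The identities for \<open>mu\<close> are then algebra with \<open>U u * S u = u\<close>.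
\<close>

lemma mediant_le_left_iff:
  fixes a b c d :: real
  assumes "b > 0" "d > 0"
  shows "(a + c) / (b + d) \<le> a / b \<longleftrightarrow> c / d \<le> a / b"
  using assms by (simp add: divide_le_eq le_divide_eq algebra_simps add_pos_pos)

lemma left_le_mediant_iff:
  fixes a b c d :: real
  assumes "b > 0" "d > 0"
  shows "a / b \<le> (a + c) / (b + d) \<longleftrightarrow> (a + c) / (b + d) \<le> c / d"
  using assms by (simp add: divide_le_eq le_divide_eq algebra_simps add_pos_pos)

lemma antimono_on_interval_Suc:
  fixes f :: "nat \<Rightarrow> 'a::order"
  assumes Suc_le: "\<And>k. a \<le> k \<Longrightarrow> k < b \<Longrightarrow> f (Suc k) \<le> f k"
    and "a \<le> j" "j \<le> k" "k \<le> b"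
  shows "f k \<le> f j"
  using assms(3,4)
proof (induction k rule: dec_induct)
  case (step m)
  have "f (Suc m) \<le> f m"
    using step.hyps step.prems assms(2) by (intro Suc_le) auto
  then show ?case using step.IH step.prems by simp
qed simp

definition U_denom :: "(nat \<Rightarrow> real) \<Rightarrow> nat \<Rightarrow> real" where
  "U_denom F i = 3 / F 1 + (\<Sum>k=2..i. 1 / F k)"

lemma U_eq_divide_U_denom: "U F i = real i / U_denom F i"
  by (simp add: U_def U_denom_def)

lemma U_denom_Suc: "1 \<le> i \<Longrightarrow> U_denom F (Suc i) = U_denom F i + 1 / F (Suc i)"
  by (simp add: U_denom_def)

lemma U_Suc: "1 \<le> i \<Longrightarrow> U F (Suc i) = (real i + 1) / (U_denom F i + 1 / F (Suc i))"
  by (simp add: U_eq_divide_U_denom U_denom_Suc add.commute)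

lemma U_denom_pos:
  assumes "\<And>k. k \<in> {1..i} \<Longrightarrow> F k > 0" "1 \<le> i"
  shows "U_denom F i > 0"
proof -
  have "(\<Sum>k=2..i. 1 / F k) \<ge> 0"
    using assms(1) by (intro sum_nonneg) (simp add: less_imp_le)
  moreover have "3 / F 1 > 0" using assms by simp
  ultimately show ?thesis unfolding U_denom_def by linarith
qed

lemma U_Suc_le_iff:
  assumes "\<And>k. k \<in> {1..Suc i} \<Longrightarrow> F k > 0" "1 \<le> i"
  shows "U F (Suc i) \<le> U F i \<longleftrightarrow> F (Suc i) \<le> U F i"
proof -
  have "U_denom F i > 0" "1 / F (Suc i) > 0"
    using assms U_denom_pos[of i F] by auto
  then show ?thesis
    using mediant_le_left_iff[of "U_denom F i" "1 / F (Suc i)" "real i" 1] assms(2)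
    by (simp add: U_Suc U_eq_divide_U_denom[of F i])
qed

lemma le_U_Suc_iff:
  assumes "\<And>k. k \<in> {1..Suc i} \<Longrightarrow> F k > 0" "1 \<le> i"
  shows "U F i \<le> U F (Suc i) \<longleftrightarrow> U F (Suc i) \<le> F (Suc i)"
proof -
  have "U_denom F i > 0" "1 / F (Suc i) > 0"
    using assms U_denom_pos[of i F] by auto
  then show ?thesis
    using left_le_mediant_iff[of "U_denom F i" "1 / F (Suc i)" "real i" 1] assms(2)
    by (simp add: U_Suc U_eq_divide_U_denom[of F i])
qed

lemma F1_mul_weights_eq_U:
  assumes "\<And>k. k \<in> {1..i} \<Longrightarrow> F k > 0" "1 \<le> i"
  shows "F 1 * (1/3 + (\<Sum>k=2..i. (1 - U F i / F k) / 3)) = U F i"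
proof -
  have F1: "F 1 > 0" using assms by simp
  have "U_denom F i > 0" by (rule U_denom_pos[OF assms])
  then have U_mul: "U F i * U_denom F i = real i"
    by (simp add: U_eq_divide_U_denom)
  have of_nat_i_minus_1: "real (i - Suc 0) = real i - 1" using assms(2) by simp
  have "(\<Sum>k=2..i. (1 - U F i / F k) / 3) = (real i - 1 - U F i * (U_denom F i - 3 / F 1)) / 3"
    by (simp add: sum_divide_distrib[symmetric] sum_subtractf sum_distrib_left U_denom_def of_nat_i_minus_1)
  also have "\<dots> = (3 * U F i / F 1 - 1) / 3"
    using U_mul by (simp add: algebra_simps)
  finally show ?thesis using F1 by (simp add: field_simps)
qed

lemma uidx_is_argmax:
  assumes "1 \<le> n"
  shows "uidx F n \<in> {1..n}" "\<And>j. j \<in> {1..n} \<Longrightarrow> U F j \<le> U F (uidx F n)"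
proof -
  have "Max (U F ` {1..n}) \<in> U F ` {1..n}"
    using assms by (intro Max_in) auto
  then obtain m where "m \<in> {1..n}" "U F m = Max (U F ` {1..n})"
    by auto
  then have argmax_ex: "\<exists>i. i \<in> {1..n} \<and> (\<forall>j\<in>{1..n}. U F j \<le> U F i)"
    by (intro exI[of _ m]) auto
  have "uidx F n \<in> {1..n} \<and> (\<forall>j\<in>{1..n}. U F j \<le> U F (uidx F n))"
    unfolding uidx_def by (rule LeastI_ex[OF argmax_ex])
  then show "uidx F n \<in> {1..n}" "\<And>j. j \<in> {1..n} \<Longrightarrow> U F j \<le> U F (uidx F n)"
    by simp_all
qed

lemma mu_eq:
  "1 \<le> k \<Longrightarrow> k < uidx F n \<Longrightarrow> mu F n k = (1 - U F (uidx F n) / F (k + 1)) / 3"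
  by (auto simp add: mu_def)

lemma sum_mu_eq:
  "(\<Sum>i=1..uidx F n - 1. mu F n i) = (\<Sum>k=2..uidx F n. (1 - U F (uidx F n) / F k) / 3)"
proof (cases "uidx F n")
  case (Suc v)
  have "(\<Sum>i=1..v. mu F n i) = (\<Sum>i=1..v. (1 - U F (uidx F n) / F (Suc i)) / 3)"
    using Suc by (intro sum.cong) (auto simp add: mu_eq)
  also have "\<dots> = (\<Sum>k=Suc 1..Suc v. (1 - U F (uidx F n) / F k) / 3)"
    by (rule sum.shift_bounds_cl_Suc_ivl[symmetric])
  finally show ?thesis using Suc by (simp add: numeral_2_eq_2)
qed simp

locale positive_antimono_from_two =
  fixes F :: "nat \<Rightarrow> real" and n :: nat
  assumes n2: "n \<ge> 2"
    and F_pos: "\<And>k. k \<in> {1..n} \<Longrightarrow> F k > 0"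
    and F_antimono: "\<And>k. 2 \<le> k \<Longrightarrow> k \<le> n - 1 \<Longrightarrow> F k \<ge> F (k + 1)"
begin

lemma F_antimono_le:
  assumes "2 \<le> j" "j \<le> k" "k \<le> n"
  shows "F k \<le> F j"
proof (rule antimono_on_interval_Suc[OF _ assms])
  fix m assume "2 \<le> m" "m < n"
  then show "F (Suc m) \<le> F m" using F_antimono[of m] by simp
qed

lemma uidx_bounds: "1 \<le> uidx F n" "uidx F n \<le> n"
  using uidx_is_argmax(1)[of n F] n2 by auto

lemma F_pos_upto: "i \<le> n \<Longrightarrow> k \<in> {1..i} \<Longrightarrow> F k > 0"
  using F_pos by simp

lemma U_uidx_le_F:
  assumes "2 \<le> k" "k \<le> uidx F n"
  shows "U F (uidx F n) \<le> F k"
proof -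
  obtain v where v: "uidx F n = Suc v" "1 \<le> v"
    using assms by (cases "uidx F n") auto
  have "U F v \<le> U F (Suc v)"
    using uidx_is_argmax(2)[of n v F] uidx_bounds v n2 by simp
  then have "U F (Suc v) \<le> F (Suc v)"
    using le_U_Suc_iff[OF F_pos_upto v(2)] uidx_bounds(2) v(1) by simp
  also have "\<dots> \<le> F k"
    using F_antimono_le[of k "Suc v"] assms uidx_bounds v(1) by simp
  finally show ?thesis using v(1) by simp
qed

lemma F_le_U_uidx:
  assumes "uidx F n < k" "k \<le> n"
  shows "F k \<le> U F (uidx F n)"
proof -
  define u where "u = uidx F n"
  have u: "1 \<le> u" "Suc u \<le> n"
    using uidx_bounds assms unfolding u_def by auto
  have "U F (Suc u) \<le> U F u"
    using uidx_is_argmax(2)[of n "Suc u" F] u unfolding u_def by simp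
  then have "F (Suc u) \<le> U F u"
    using U_Suc_le_iff[OF F_pos_upto u(1)] u(2) by simp
  moreover have "F k \<le> F (Suc u)"
    using F_antimono_le[of "Suc u" k] assms u unfolding u_def by simp
  ultimately show ?thesis unfolding u_def by simp
qed

lemma mu_nonneg: "mu F n k \<ge> 0"
proof (cases "1 \<le> k \<and> k < uidx F n")
  case True
  then have "U F (uidx F n) \<le> F (k + 1)" "F (k + 1) > 0"
    using U_uidx_le_F[of "k + 1"] F_pos uidx_bounds by auto
  then show ?thesis using True by (simp add: mu_eq)
qed (auto simp add: mu_def)

lemma F_mul_mu_eq_U_uidx:
  assumes "2 \<le> k" "k \<le> uidx F n"
  shows "F k * (1 - 3 * mu F n (k - 1)) = U F (uidx F n)"
  using assms F_pos[of k] uidx_bounds(2) by (simp add: mu_eq field_simps)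

end

theorem lemma6:
  fixes F :: "nat \<Rightarrow> real" and n :: nat
  assumes "n \<ge> 2"
    and "\<And>k. k \<in> {1..n} \<Longrightarrow> F k > 0"
    and "\<And>k. 2 \<le> k \<Longrightarrow> k \<le> n - 1 \<Longrightarrow> F k \<ge> F (k + 1)"
  shows "(\<forall>k\<in>{1..n-1}. mu F n k \<ge> 0)
       \<and> (\<forall>k\<in>{2..uidx F n}.
            F 1 * (1/3 + (\<Sum>i=1..uidx F n - 1. mu F n i)) = U F (uidx F n)
          \<and> F k * (1 - 3 * mu F n (k - 1)) = U F (uidx F n))
       \<and> (\<forall>k\<in>{uidx F n + 1..n}. F k \<le> U F (uidx F n))"
proof -
  interpret positive_antimono_from_two F n
    using assms by unfold_locales
  have "F 1 * (1/3 + (\<Sum>i=1..uidx F n - 1. mu F n i)) = U F (uidx F n)"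
    unfolding sum_mu_eq using uidx_bounds F_pos by (intro F1_mul_weights_eq_U) auto
  moreover have "\<forall>k\<in>{2..uidx F n}. F k * (1 - 3 * mu F n (k - 1)) = U F (uidx F n)"
    by (intro ballI F_mul_mu_eq_U_uidx) auto
  moreover have "\<forall>k\<in>{uidx F n + 1..n}. F k \<le> U F (uidx F n)"
    by (intro ballI F_le_U_uidx) auto
  ultimately show ?thesis
    using mu_nonneg by blast
qed

end
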